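(* In the Cournot game described in the context, suppose each $J^i$ is twice continuously differentiable and $p(\sigma)=-D\sigma+d$ with $D\in\mathbb{R}^{V\times V}$, $D\succeq0$, $d\in\mathbb{R}^V$. If the communication matrix $T$ is symmetric ($T=T^\top$), then for every even $\nu\in\mathbb{N}$ the operator $F_\nu(x)=[\nabla_{x^i}J^i(x^i,\sigma^i_\nu(x))]_{i=1}^N$ is strongly monotone on $\mathcal{X}$.
   Context: Cournot game: $N$ firms, $V$ markets (nodes of a directed transportation network with $E$ edges and incidence matrix $B\in\{0,1,-1\}^{V\times E}$). Firm $i$ produces at location $\ell_i$; its strategy is $x^i=[t^i;r^i]\in\mathbb{R}^{E+1}_{\ge0}$ ($t^i_e$ transported on edge $e$, $r^i$ total production); sales $y^i=H^ix^i$ with $H^i=[B,e_{\ell_i}]\in\mathbb{R}^{V\times(E+1)}$. Individual constraint $\mathcal{X}^i=\{x^i\in\mathbb{R}^{E+1}_{\ge0}:x^i\le\bar r^i\mathbf{1}_{E+1},\ H^ix^i\ge0\}$, $\bar r^i>0$; $\mathcal{X}=\mathcal{X}^1\times\dots\times\mathcal{X}^N$. Costs $c^i_e(t)=\beta^i_et-\gamma^i_e(t)$, $a^i(r)=\beta^i_ar-\gamma^i_a(r)$, each $\gamma$ strongly concave, increasing, with maximum derivative smaller than the corresponding $\beta$. $J^i(z_1,z_2)=a^i(r^i)+\sum_ec^i_e(t^i_e)-p(z_2)^\top H^iz_1$, $z_1=x^i$. Communication matrix $T\in[0,1]^{N\times N}$, primitive and doubly stochastic. Local aggregate $\sigma^i_\nu(x)=\sum_j[T^\nu]_{ij}H^jx^j$;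 $\nabla_{x^i}J^i(x^i,\sigma^i_\nu(x))$ is the gradient of $x^i\mapsto J^i(x^i,[T^\nu]_{ii}H^ix^i+\sum_{j\ne i}[T^\nu]_{ij}H^jx^j)$. $D\succeq0$ means $z^\top Dz\ge0$ for all $z$. Strongly monotone: exists $\alpha>0$ with $(F(x)-F(y))^\top(x-y)\ge\alpha\|x-y\|^2$ for all $x,y\in\mathcal{X}$. *)

theory Defs
  imports "HOL-Analysis.Analysis"
begin

primrec mpow :: "real^'n^'n \<Rightarrow> nat \<Rightarrow> real^'n^'n" where
  "mpow T 0 = mat 1"
| "mpow T (Suc k) = T ** mpow T k"

definition doubly_stochastic :: "real^'n^'n \<Rightarrow> bool" where
  "doubly_stochastic T \<longleftrightarrow> (\<forall>i j. 0 \<le> T$i$j) \<and>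
     (\<forall>i. (\<Sum>j\<in>UNIV. T$i$j) = 1) \<and> (\<forall>j. (\<Sum>i\<in>UNIV. T$i$j) = 1)"

definition primitive_matrix :: "real^'n^'n \<Rightarrow> bool" where
  "primitive_matrix T \<longleftrightarrow> (\<forall>i j. 0 \<le> T$i$j) \<and> (\<exists>k. \<forall>i j. 0 < mpow T k $i$j)"

definition strongly_concave_on :: "real set \<Rightarrow> (real \<Rightarrow> real) \<Rightarrow> bool" where
  "strongly_concave_on S f \<longleftrightarrow> (\<exists>\<mu>>0. \<forall>x\<in>S. \<forall>y\<in>S. \<forall>\<theta>\<in>{0..1}.
     \<theta> * f x + (1 - \<theta>) * f y + \<mu> / 2 * \<theta> * (1 - \<theta>) * (x - y)^2 \<le> f (\<theta> * x + (1 - \<theta>) * y))"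

definition C2_real :: "(real \<Rightarrow> real) \<Rightarrow> bool" where
  "C2_real f \<longleftrightarrow> (\<exists>f' f''. (\<forall>x. (f has_real_derivative f' x) (at x)) \<and>
     (\<forall>x. (f' has_real_derivative f'' x) (at x)) \<and> continuous_on UNIV f'')"

definition grad :: "('a::euclidean_space \<Rightarrow> real) \<Rightarrow> 'a \<Rightarrow> 'a" where
  "grad f z = (THE g. (f has_derivative (\<lambda>h. g \<bullet> h)) (at z))"

(* Strategy of a firm: (t, r) with t \<in> R^E transported quantities, r total production.
   H^i x^i = B t + r e_{loc i}. *)
definition Hmap :: "real^'e^'v \<Rightarrow> 'v \<Rightarrow> (real^'e) \<times> real \<Rightarrow> real^'v" where
  "Hmap B l z = B *v fst z + snd z *\<^sub>R axis l 1"

definition Xset :: "real^'e^'v \<Rightarrow> 'v \<Rightarrow> real \<Rightarrow> ((real^'e) \<times> real) set" where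
  "Xset B l rbar = {z. (\<forall>e. 0 \<le> fst z $ e \<and> fst z $ e \<le> rbar) \<and> 0 \<le> snd z \<and> snd z \<le> rbar
                      \<and> (\<forall>v. 0 \<le> Hmap B l z $ v)}"

definition Jcost :: "real^'e^'v \<Rightarrow> 'v \<Rightarrow> (real \<Rightarrow> real) \<Rightarrow> ('e \<Rightarrow> real \<Rightarrow> real)
     \<Rightarrow> (real^'v \<Rightarrow> real^'v) \<Rightarrow> (real^'e) \<times> real \<Rightarrow> real^'v \<Rightarrow> real" where
  "Jcost B l a c p z1 z2 = a (snd z1) + (\<Sum>e\<in>UNIV. c e (fst z1 $ e)) - p z2 \<bullet> Hmap B l z1"

definition sigma_loc :: "real^'n^'n \<Rightarrow> nat \<Rightarrow> real^'e^'v \<Rightarrow> ('n \<Rightarrow> 'v)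
     \<Rightarrow> ('n \<Rightarrow> (real^'e) \<times> real) \<Rightarrow> 'n \<Rightarrow> real^'v" where
  "sigma_loc T \<nu> B loc x i = (\<Sum>j\<in>UNIV. mpow T \<nu> $ i $ j *\<^sub>R Hmap B (loc j) (x j))"

definition Fop :: "real^'n^'n \<Rightarrow> nat \<Rightarrow> real^'e^'v \<Rightarrow> ('n \<Rightarrow> 'v)
     \<Rightarrow> ('n \<Rightarrow> real \<Rightarrow> real) \<Rightarrow> ('n \<Rightarrow> 'e \<Rightarrow> real \<Rightarrow> real) \<Rightarrow> (real^'v \<Rightarrow> real^'v)
     \<Rightarrow> ('n \<Rightarrow> (real^'e) \<times> real) \<Rightarrow> 'n \<Rightarrow> (real^'e) \<times> real" where
  "Fop T \<nu> B loc a c p x i = grad (\<lambda>z. Jcost B (loc i) (a i) (c i) p z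
      (mpow T \<nu> $ i $ i *\<^sub>R Hmap B (loc i) z
       + (\<Sum>j\<in>UNIV - {i}. mpow T \<nu> $ i $ j *\<^sub>R Hmap B (loc j) (x j)))) (x i)"

definition strongly_monotone_on :: "('n::finite \<Rightarrow> 'a::real_inner) set
     \<Rightarrow> (('n \<Rightarrow> 'a) \<Rightarrow> 'n \<Rightarrow> 'a) \<Rightarrow> bool" where
  "strongly_monotone_on X F \<longleftrightarrow> (\<exists>\<alpha>>0. \<forall>x\<in>X. \<forall>y\<in>X.
     (\<Sum>i\<in>UNIV. (F x i - F y i) \<bullet> (x i - y i)) \<ge> \<alpha> * (\<Sum>i\<in>UNIV. (norm (x i - y i))^2))"

end

(*
  With w_j = H^j (x^j - y^j) and M = T^nu, the pairing sum_i (F_nu(x)_i - F_nu(y)_i) . (x^i - y^i)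
  splits into a cost part, which is strongly monotone because the gamma's are strongly concave,
  and a price part sum_i M_ii w_i . D w_i + sum_{i,j} M_ij w_i . D w_j (the own aggregate enters
  the price, and the price multiplies the own sales). For symmetric T and nu = 2m the matrix
  M = (T^m)^T T^m is a Gram matrix: its diagonal is nonnegative and, with u_k = sum_i [T^m]_ki w_i,
  the double sum equals sum_k u_k . D u_k >= 0 because D is positive semidefinite.
*)

theory Submission
  imports Defs
begin

lemma mpow_add: "mpow T (m + n) = mpow T m ** mpow T n"
  by (induction m) (auto simp: matrix_mul_assoc)

lemma mpow_commute: "mpow T m ** T = T ** mpow T m"
  using mpow_add[of T m 1] mpow_add[of T 1 m] by (simp add: add.commute)

lemma transpose_mpow:
  assumes "transpose T = T"
  shows "transpose (mpow T m) = mpow T m"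
  by (induction m) (auto simp: matrix_transpose_mul assms mpow_commute)

lemma mpow_even_Gram:
  assumes "transpose T = T" and "even \<nu>"
  shows "mpow T \<nu> = transpose (mpow T (\<nu> div 2)) ** mpow T (\<nu> div 2)"
  using assms mpow_add[of T "\<nu> div 2" "\<nu> div 2"] transpose_mpow[OF assms(1)]
  by (metis add_self_div_2 div_plus_div_distrib_dvd_left)

lemma Gram_entry: "(transpose S ** S) $ i $ j = (\<Sum>k\<in>UNIV. S $ k $ i * S $ k $ j)"
  by (simp add: matrix_matrix_mult_def transpose_def)

lemma Gram_diag_nonneg:
  fixes S :: "real^'n::finite^'k::finite"
  shows "0 \<le> (transpose S ** S) $ i $ i"
  by (simp add: Gram_entry sum_nonneg)

lemma Gram_weighted_form_nonneg:
  fixes S :: "real^'n::finite^'k::finite" and D :: "real^'v::finite^'v" and w :: "'n \<Rightarrow> real^'v"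
  assumes psd: "\<forall>z. 0 \<le> z \<bullet> (D *v z)"
  shows "0 \<le> (\<Sum>i\<in>UNIV. \<Sum>j\<in>UNIV. (transpose S ** S) $ i $ j * (w i \<bullet> (D *v w j)))"
proof -
  define u where "u k = (\<Sum>i\<in>UNIV. S $ k $ i *\<^sub>R w i)" for k
  have form_u: "u k \<bullet> (D *v u k) = (\<Sum>i\<in>UNIV. \<Sum>j\<in>UNIV. S $ k $ i * S $ k $ j * (w i \<bullet> (D *v w j)))" for k
    by (simp add: u_def matrix_vector_mult_scaleR linear_sum[OF matrix_vector_mul_linear]
        inner_sum_left inner_sum_right sum_distrib_left mult.assoc)
      (subst sum.swap, simp only: mult.left_commute)
  have "0 \<le> (\<Sum>k\<in>UNIV. u k \<bullet> (D *v u k))"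
    using psd by (simp add: sum_nonneg)
  also have "\<dots> = (\<Sum>i\<in>UNIV. \<Sum>j\<in>UNIV. \<Sum>k\<in>UNIV. S $ k $ i * S $ k $ j * (w i \<bullet> (D *v w j)))"
    by (simp only: form_u) (rule trans[OF sum.swap sum.cong[OF refl sum.swap]])
  also have "\<dots> = (\<Sum>i\<in>UNIV. \<Sum>j\<in>UNIV. (transpose S ** S) $ i $ j * (w i \<bullet> (D *v w j)))"
    by (simp add: Gram_entry sum_distrib_right)
  finally show ?thesis .
qed

lemma strongly_concave_tangent:
  fixes f :: "real \<Rightarrow> real"
  assumes sc: "\<forall>x\<in>S. \<forall>y\<in>S. \<forall>\<theta>\<in>{0..1}.
     \<theta> * f x + (1 - \<theta>) * f y + \<mu> / 2 * \<theta> * (1 - \<theta>) * (x - y)^2 \<le> f (\<theta> * x + (1 - \<theta>) * y)"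
    and f': "(f has_real_derivative Df) (at y)"
    and "x \<in> S" and "y \<in> S"
  shows "f x - f y + \<mu> / 2 * (x - y)^2 \<le> Df * (x - y)"
  \<comment> \<open>Divide the defining inequality at \<open>\<theta> = t\<close> by \<open>t\<close> and let \<open>t \<rightarrow> 0\<^sup>+\<close>.\<close>
proof -
  define \<phi> where "\<phi> t = f (y + t * (x - y))" for t
  have "(\<phi> has_real_derivative Df * (x - y)) (at 0)"
    unfolding \<phi>_def using f' by (auto intro!: derivative_eq_intros DERIV_chain2[of f])
  then have "((\<lambda>t. (\<phi> t - \<phi> 0) / t) \<longlongrightarrow> Df * (x - y)) (at_right 0)"
    by (simp add: has_field_derivative_iff filterlim_at_split)
  moreover have "((\<lambda>t. f x - f y + \<mu> / 2 * (1 - t) * (x - y)^2)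
      \<longlongrightarrow> f x - f y + \<mu> / 2 * (1 - 0) * (x - y)^2) (at_right 0)"
    by (intro tendsto_intros)
  moreover have "\<forall>\<^sub>F t in at_right 0. f x - f y + \<mu> / 2 * (1 - t) * (x - y)^2 \<le> (\<phi> t - \<phi> 0) / t"
  proof (rule eventually_mono[OF eventually_at_right_real[of 0 1]])
    fix t :: real assume t: "t \<in> {0<..<1}"
    have "\<phi> t = f (t * x + (1 - t) * y)" and "\<phi> 0 = f y"
      by (simp_all add: \<phi>_def algebra_simps)
    moreover have "t * f x + (1 - t) * f y + \<mu> / 2 * t * (1 - t) * (x - y)^2 \<le> f (t * x + (1 - t) * y)"
      using sc \<open>x \<in> S\<close> \<open>y \<in> S\<close> t by simp
    ultimately have "t * (f x - f y + \<mu> / 2 * (1 - t) * (x - y)^2) \<le> \<phi> t - \<phi> 0"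
      by (simp add: algebra_simps)
    then show "f x - f y + \<mu> / 2 * (1 - t) * (x - y)^2 \<le> (\<phi> t - \<phi> 0) / t"
      using t by (simp add: pos_le_divide_eq mult.commute)
  qed simp
  ultimately have "f x - f y + \<mu> / 2 * (1 - 0) * (x - y)^2 \<le> Df * (x - y)"
    by (intro tendsto_le[of "at_right 0"]) auto
  then show ?thesis by simp
qed

lemma strongly_concave_on_deriv_monotone:
  assumes "strongly_concave_on S f" and "\<And>x. (f has_real_derivative f' x) (at x)"
  shows "\<exists>\<mu>>0. \<forall>x\<in>S. \<forall>y\<in>S. \<mu> * (x - y)^2 \<le> (f' y - f' x) * (x - y)"
proof -
  obtain \<mu> where "\<mu> > 0" and sc: "\<forall>x\<in>S. \<forall>y\<in>S. \<forall>\<theta>\<in>{0..1}.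
     \<theta> * f x + (1 - \<theta>) * f y + \<mu> / 2 * \<theta> * (1 - \<theta>) * (x - y)^2 \<le> f (\<theta> * x + (1 - \<theta>) * y)"
    using assms(1) unfolding strongly_concave_on_def by blast
  have "\<mu> * (x - y)^2 \<le> (f' y - f' x) * (x - y)" if "x \<in> S" "y \<in> S" for x y
    using strongly_concave_tangent[OF sc assms(2)[of y] that]
      strongly_concave_tangent[OF sc assms(2)[of x] that(2,1)]
    by (simp add: power2_commute algebra_simps)
  with \<open>\<mu> > 0\<close> show ?thesis by blast
qed

lemma finite_uniform_modulus:
  fixes P :: "'i::finite \<Rightarrow> real \<Rightarrow> bool"
  assumes "\<And>i. \<exists>\<mu>>0. P i \<mu>"
    and "\<And>i \<mu> \<mu>'. P i \<mu> \<Longrightarrow> 0 < \<mu>' \<Longrightarrow> \<mu>' \<le> \<mu> \<Longrightarrow> P i \<mu>'"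
  shows "\<exists>\<mu>>0. \<forall>i. P i \<mu>"
proof -
  obtain m where m: "\<And>i. 0 < m i \<and> P i (m i)" using assms(1) by metis
  have "0 < Min (range m)" using m by simp
  moreover have "P i (Min (range m))" for i
    using assms(2)[OF conjunct2[OF m] \<open>0 < Min (range m)\<close>] by simp
  ultimately show ?thesis by blast
qed

lemma grad_inner:
  fixes f :: "'a::euclidean_space \<Rightarrow> real"
  assumes "(f has_derivative f') (at z)"
  shows "grad f z \<bullet> h = f' h"
proof -
  define g where "g = adjoint f' 1"
  have f'_rep: "f' = (\<lambda>h. g \<bullet> h)"
    using adjoint_works[OF has_derivative_linear[OF assms], of _ 1]
    by (auto simp: g_def inner_commute)
  with assms have g: "(f has_derivative (\<lambda>h. g \<bullet> h)) (at z)" by simp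
  have "grad f z = g"
    unfolding grad_def
  proof (rule the_equality)
    fix g' assume "(f has_derivative (\<lambda>h. g' \<bullet> h)) (at z)"
    from has_derivative_unique[OF this g] show "g' = g"
      by (metis vector_eq_rdot)
  qed (rule g)
  then show ?thesis by (simp add: f'_rep)
qed

lemma bounded_linear_Hmap: "bounded_linear (Hmap B l)"
  unfolding Hmap_def
  by (intro bounded_linear_add bounded_linear_compose[OF matrix_vector_mul_bounded_linear]
      bounded_linear_compose[OF bounded_linear_scaleR_left] bounded_linear_fst bounded_linear_snd)


lemma Jcost_has_derivative:
  fixes B :: "real^'e::finite^'v::finite" and D :: "real^'v^'v"
    and z :: "(real^'e) \<times> real"
  assumes da: "(ga has_real_derivative Dga) (at (snd z))"
    and dc: "\<And>e. (gc e has_real_derivative Dgc e) (at (fst z $ e))"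
  shows "((\<lambda>z. Jcost B l (\<lambda>r. ba * r - ga r) (\<lambda>e t. bc e * t - gc e t) (\<lambda>\<sigma>. - (D *v \<sigma>) + d) z
            (\<tau> *\<^sub>R Hmap B l z + s)) has_derivative
      (\<lambda>h. (ba - Dga) * snd h + (\<Sum>e\<in>UNIV. (bc e - Dgc e) * fst h $ e)
         + (D *v (\<tau> *\<^sub>R Hmap B l h)) \<bullet> Hmap B l z + (D *v (\<tau> *\<^sub>R Hmap B l z + s) - d) \<bullet> Hmap B l h))
    (at z)"
proof -
  have H: "(Hmap B l has_derivative Hmap B l) (at z)"
    by (rule bounded_linear.has_derivative[OF bounded_linear_Hmap has_derivative_ident])
  have comp: "((\<lambda>z. fst z $ e) has_derivative (\<lambda>h. fst h $ e)) (at z)" for e :: 'e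
    by (rule bounded_linear.has_derivative[OF bounded_linear_vec_nth has_derivative_fst[OF has_derivative_ident]])
  have a: "((\<lambda>z. ga (snd z)) has_derivative (\<lambda>h. snd h * Dga)) (at z)"
    by (rule DERIV_compose_FDERIV[where g=snd, OF da has_derivative_snd[OF has_derivative_ident]])
  have c: "((\<lambda>z. gc e (fst z $ e)) has_derivative (\<lambda>h. fst h $ e * Dgc e)) (at z)" for e
    by (rule DERIV_compose_FDERIV[where g="\<lambda>z. fst z $ e", OF dc comp])
  show ?thesis
    unfolding Jcost_def
    by (rule has_derivative_eq_rhs, (rule derivative_intros H comp a c
          bounded_linear.has_derivative[OF matrix_vector_mul_bounded_linear[of D]])+)
      (simp add: fun_eq_iff algebra_simps sum_subtractf inner_diff_left matrix_vector_mult_scaleR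
          matrix_vector_right_distrib inner_commute)
qed

lemma Hmap_diff: "Hmap B l (z - z') = Hmap B l z - Hmap B l z'"
  by (rule linear_diff[OF bounded_linear.linear[OF bounded_linear_Hmap]])

lemma sigma_loc_diff:
  "sigma_loc T \<nu> B loc x i - sigma_loc T \<nu> B loc y i
     = (\<Sum>j\<in>UNIV. mpow T \<nu> $ i $ j *\<^sub>R Hmap B (loc j) (x j - y j))"
  by (simp add: sigma_loc_def Hmap_diff sum_subtractf scaleR_diff_right)

abbreviation linear_price_Fop where
  "linear_price_Fop T \<nu> B loc \<beta>a \<gamma>a \<beta>c \<gamma>c D d \<equiv>
     Fop T \<nu> B loc (\<lambda>i r. \<beta>a i * r - \<gamma>a i r) (\<lambda>i e t. \<beta>c i e * t - \<gamma>c i e t) (\<lambda>\<sigma>. - (D *v \<sigma>) + d)"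

definition cost_grad :: "real \<Rightarrow> (real \<Rightarrow> real) \<Rightarrow> ('e::finite \<Rightarrow> real) \<Rightarrow> ('e \<Rightarrow> real \<Rightarrow> real)
    \<Rightarrow> (real^'e) \<times> real \<Rightarrow> (real^'e) \<times> real" where
  "cost_grad \<beta>a \<gamma>a' \<beta>c \<gamma>c' z = ((\<chi> e. \<beta>c e - \<gamma>c' e (fst z $ e)), \<beta>a - \<gamma>a' (snd z))"

lemma linear_price_Fop_inner:
  fixes B :: "real^'e::finite^'v::finite" and D :: "real^'v^'v" and T :: "real^'n::finite^'n"
  assumes da: "\<And>r. (\<gamma>a i has_real_derivative \<gamma>a' r) (at r)"
    and dc: "\<And>e t. (\<gamma>c i e has_real_derivative \<gamma>c' e t) (at t)"
  shows "linear_price_Fop T \<nu> B loc \<beta>a \<gamma>a \<beta>c \<gamma>c D d x i \<bullet> h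
     = cost_grad (\<beta>a i) \<gamma>a' (\<beta>c i) \<gamma>c' (x i) \<bullet> h
       + (D *v (mpow T \<nu> $ i $ i *\<^sub>R Hmap B (loc i) h)) \<bullet> Hmap B (loc i) (x i)
       + (D *v sigma_loc T \<nu> B loc x i - d) \<bullet> Hmap B (loc i) h"
proof -
  have "sigma_loc T \<nu> B loc x i = mpow T \<nu> $ i $ i *\<^sub>R Hmap B (loc i) (x i)
      + (\<Sum>j\<in>UNIV - {i}. mpow T \<nu> $ i $ j *\<^sub>R Hmap B (loc j) (x j))"
    unfolding sigma_loc_def by (rule sum.remove) auto
  moreover have "cost_grad (\<beta>a i) \<gamma>a' (\<beta>c i) \<gamma>c' (x i) \<bullet> h
      = (\<beta>a i - \<gamma>a' (snd (x i))) * snd h + (\<Sum>e\<in>UNIV. (\<beta>c i e - \<gamma>c' e (fst (x i) $ e)) * fst h $ e)"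
    by (simp add: cost_grad_def inner_prod_def inner_vec_def add.commute)
  ultimately show ?thesis
    unfolding Fop_def by (simp only: grad_inner[OF Jcost_has_derivative[where z="x i", OF da dc]])
qed

lemma linear_price_Fop_inner_diff:
  fixes B :: "real^'e::finite^'v::finite" and D :: "real^'v^'v" and T :: "real^'n::finite^'n"
    and loc :: "'n \<Rightarrow> 'v" and x y :: "'n \<Rightarrow> (real^'e) \<times> real"
  assumes da: "\<And>r. (\<gamma>a i has_real_derivative \<gamma>a' r) (at r)"
    and dc: "\<And>e t. (\<gamma>c i e has_real_derivative \<gamma>c' e t) (at t)"
  defines "w \<equiv> \<lambda>j. Hmap B (loc j) (x j - y j)"
  shows "(linear_price_Fop T \<nu> B loc \<beta>a \<gamma>a \<beta>c \<gamma>c D d x i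
          - linear_price_Fop T \<nu> B loc \<beta>a \<gamma>a \<beta>c \<gamma>c D d y i) \<bullet> (x i - y i)
     = (cost_grad (\<beta>a i) \<gamma>a' (\<beta>c i) \<gamma>c' (x i) - cost_grad (\<beta>a i) \<gamma>a' (\<beta>c i) \<gamma>c' (y i)) \<bullet> (x i - y i)
       + mpow T \<nu> $ i $ i * (w i \<bullet> (D *v w i))
       + (\<Sum>j\<in>UNIV. mpow T \<nu> $ i $ j * (w i \<bullet> (D *v w j)))"
proof -
  let ?\<tau> = "mpow T \<nu> $ i $ i"
  have own: "(D *v (?\<tau> *\<^sub>R w i)) \<bullet> Hmap B (loc i) (x i) - (D *v (?\<tau> *\<^sub>R w i)) \<bullet> Hmap B (loc i) (y i)
      = ?\<tau> * (w i \<bullet> (D *v w i))"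
    unfolding inner_diff_right[symmetric]
    by (simp add: w_def Hmap_diff[symmetric] matrix_vector_mult_scaleR inner_commute)
  have others: "(D *v sigma_loc T \<nu> B loc x i - d) \<bullet> w i - (D *v sigma_loc T \<nu> B loc y i - d) \<bullet> w i
      = (\<Sum>j\<in>UNIV. mpow T \<nu> $ i $ j * (w i \<bullet> (D *v w j)))"
    unfolding inner_diff_left[symmetric] diff_diff_eq2
    by (simp add: matrix_vector_mult_diff_distrib[symmetric] sigma_loc_diff w_def
        linear_sum[OF matrix_vector_mul_linear] matrix_vector_mult_scaleR inner_sum_left inner_sum_right
        inner_commute)
  have w_i: "Hmap B (loc i) (x i - y i) = w i" by (simp add: w_def)
  show ?thesis
    unfolding inner_diff_left[of "linear_price_Fop T \<nu> B loc \<beta>a \<gamma>a \<beta>c \<gamma>c D d x i"]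
      inner_diff_left[of "cost_grad (\<beta>a i) \<gamma>a' (\<beta>c i) \<gamma>c' (x i)"]
      linear_price_Fop_inner[where \<gamma>a=\<gamma>a and \<gamma>c=\<gamma>c and i=i and \<gamma>a'=\<gamma>a' and \<gamma>c'=\<gamma>c', OF da dc] w_i
    using own others by linarith
qed

lemma linear_price_Fop_sum_inner_diff:
  fixes B :: "real^'e::finite^'v::finite" and D :: "real^'v^'v" and T :: "real^'n::finite^'n"
    and loc :: "'n \<Rightarrow> 'v" and x y :: "'n \<Rightarrow> (real^'e) \<times> real"
    and \<beta>a :: "'n \<Rightarrow> real" and \<beta>c :: "'n \<Rightarrow> 'e \<Rightarrow> real"
  assumes da: "\<And>i r. (\<gamma>a i has_real_derivative \<gamma>a' i r) (at r)"
    and dc: "\<And>i e t. (\<gamma>c i e has_real_derivative \<gamma>c' i e t) (at t)"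
  defines "G \<equiv> \<lambda>i. cost_grad (\<beta>a i) (\<gamma>a' i) (\<beta>c i) (\<gamma>c' i)"
    and "w \<equiv> \<lambda>j. Hmap B (loc j) (x j - y j)"
  shows "(\<Sum>i\<in>UNIV. (linear_price_Fop T \<nu> B loc \<beta>a \<gamma>a \<beta>c \<gamma>c D d x i
          - linear_price_Fop T \<nu> B loc \<beta>a \<gamma>a \<beta>c \<gamma>c D d y i) \<bullet> (x i - y i))
     = (\<Sum>i\<in>UNIV. (G i (x i) - G i (y i)) \<bullet> (x i - y i))
       + (\<Sum>i\<in>UNIV. mpow T \<nu> $ i $ i * (w i \<bullet> (D *v w i)))
       + (\<Sum>i\<in>UNIV. \<Sum>j\<in>UNIV. mpow T \<nu> $ i $ j * (w i \<bullet> (D *v w j)))"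
proof -
  have "(linear_price_Fop T \<nu> B loc \<beta>a \<gamma>a \<beta>c \<gamma>c D d x i
          - linear_price_Fop T \<nu> B loc \<beta>a \<gamma>a \<beta>c \<gamma>c D d y i) \<bullet> (x i - y i)
     = (G i (x i) - G i (y i)) \<bullet> (x i - y i) + mpow T \<nu> $ i $ i * (w i \<bullet> (D *v w i))
       + (\<Sum>j\<in>UNIV. mpow T \<nu> $ i $ j * (w i \<bullet> (D *v w j)))" for i
    unfolding G_def w_def by (rule linear_price_Fop_inner_diff[OF da dc])
  then show ?thesis by (simp only: sum.distrib)
qed

lemma cost_grad_strongly_monotone:
  fixes \<gamma>a :: "real \<Rightarrow> real" and \<gamma>c :: "'e::finite \<Rightarrow> real \<Rightarrow> real"
  assumes sc_a: "strongly_concave_on {0..R} \<gamma>a" and da: "\<And>r. (\<gamma>a has_real_derivative \<gamma>a' r) (at r)"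
    and sc_c: "\<And>e. strongly_concave_on {0..R} (\<gamma>c e)"
    and dc: "\<And>e t. (\<gamma>c e has_real_derivative \<gamma>c' e t) (at t)"
  shows "\<exists>\<mu>>0. \<forall>z\<in>Xset B l R. \<forall>z'\<in>Xset B l R.
     \<mu> * (norm (z - z'))^2 \<le> (cost_grad \<beta>a \<gamma>a' \<beta>c \<gamma>c' z - cost_grad \<beta>a \<gamma>a' \<beta>c \<gamma>c' z') \<bullet> (z - z')"
proof -
  obtain \<mu>a where "\<mu>a > 0" and mon_a: "\<forall>r\<in>{0..R}. \<forall>r'\<in>{0..R}. \<mu>a * (r - r')^2 \<le> (\<gamma>a' r' - \<gamma>a' r) * (r - r')"
    using strongly_concave_on_deriv_monotone[OF sc_a da] by blast
  obtain \<mu>c where "\<mu>c > 0"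
    and mon_c: "\<forall>e. \<forall>t\<in>{0..R}. \<forall>t'\<in>{0..R}. \<mu>c * (t - t')^2 \<le> (\<gamma>c' e t' - \<gamma>c' e t) * (t - t')"
  proof -
    have "\<exists>\<mu>>0. \<forall>e. \<forall>t\<in>{0..R}. \<forall>t'\<in>{0..R}. \<mu> * (t - t')^2 \<le> (\<gamma>c' e t' - \<gamma>c' e t) * (t - t')"
      using strongly_concave_on_deriv_monotone[OF sc_c dc]
      by (intro finite_uniform_modulus) (auto intro: order_trans[OF mult_right_mono])
    then show ?thesis using that by blast
  qed
  define \<mu> where "\<mu> = min \<mu>a \<mu>c"
  have "\<mu> * (norm (z - z'))^2 \<le> (cost_grad \<beta>a \<gamma>a' \<beta>c \<gamma>c' z - cost_grad \<beta>a \<gamma>a' \<beta>c \<gamma>c' z') \<bullet> (z - z')"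
    if "z \<in> Xset B l R" "z' \<in> Xset B l R" for z z'
  proof -
    have "(norm (z - z'))^2 = (snd z - snd z')^2 + (\<Sum>e\<in>UNIV. (fst z $ e - fst z' $ e)^2)"
      by (simp only: power2_norm_eq_inner) (simp add: inner_prod_def inner_vec_def power2_eq_square)
    moreover have "(cost_grad \<beta>a \<gamma>a' \<beta>c \<gamma>c' z - cost_grad \<beta>a \<gamma>a' \<beta>c \<gamma>c' z') \<bullet> (z - z')
        = (\<gamma>a' (snd z') - \<gamma>a' (snd z)) * (snd z - snd z')
          + (\<Sum>e\<in>UNIV. (\<gamma>c' e (fst z' $ e) - \<gamma>c' e (fst z $ e)) * (fst z $ e - fst z' $ e))"
      by (simp add: cost_grad_def inner_prod_def inner_vec_def add.commute)
    moreover have "\<mu> * (snd z - snd z')^2 \<le> (\<gamma>a' (snd z') - \<gamma>a' (snd z)) * (snd z - snd z')"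
      using mon_a that \<open>\<mu>a > 0\<close>
      by (intro order_trans[OF mult_right_mono[of \<mu> \<mu>a]]) (auto simp: \<mu>_def Xset_def)
    moreover have "\<mu> * (fst z $ e - fst z' $ e)^2 \<le> (\<gamma>c' e (fst z' $ e) - \<gamma>c' e (fst z $ e)) * (fst z $ e - fst z' $ e)"
      for e
      using mon_c that \<open>\<mu>c > 0\<close>
      by (intro order_trans[OF mult_right_mono[of \<mu> \<mu>c]]) (auto simp: \<mu>_def Xset_def)
    then have "\<mu> * (\<Sum>e\<in>UNIV. (fst z $ e - fst z' $ e)^2)
        \<le> (\<Sum>e\<in>UNIV. (\<gamma>c' e (fst z' $ e) - \<gamma>c' e (fst z $ e)) * (fst z $ e - fst z' $ e))"
      unfolding sum_distrib_left by (rule sum_mono)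
    ultimately show ?thesis by (simp add: distrib_left)
  qed
  moreover have "\<mu> > 0" using \<open>\<mu>a > 0\<close> \<open>\<mu>c > 0\<close> by (simp add: \<mu>_def)
  ultimately show ?thesis by blast
qed

lemma C2_real_has_deriv: "C2_real f \<Longrightarrow> (f has_real_derivative deriv f x) (at x)"
  unfolding C2_real_def by (metis DERIV_imp_deriv)

theorem lemma4:
  fixes B :: "real^'e::finite^'v::finite"
    and loc :: "'n::finite \<Rightarrow> 'v"
    and rbar :: "'n \<Rightarrow> real"
    and \<beta>a :: "'n \<Rightarrow> real" and \<gamma>a :: "'n \<Rightarrow> real \<Rightarrow> real"
    and \<beta>c :: "'n \<Rightarrow> 'e \<Rightarrow> real" and \<gamma>c :: "'n \<Rightarrow> 'e \<Rightarrow> real \<Rightarrow> real"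
    and D :: "real^'v^'v" and d :: "real^'v"
    and T :: "real^'n^'n"
    and \<nu> :: nat
  assumes B_inc: "\<forall>v e. B$v$e \<in> {-1, 0, 1}"
    and rbar_pos: "\<forall>i. 0 < rbar i"
    and C2_a: "\<forall>i. C2_real (\<gamma>a i)"
    and C2_c: "\<forall>i e. C2_real (\<gamma>c i e)"
    and sc_a: "\<forall>i. strongly_concave_on {0..rbar i} (\<gamma>a i)"
    and sc_c: "\<forall>i e. strongly_concave_on {0..rbar i} (\<gamma>c i e)"
    and inc_a: "\<forall>i. mono_on {0..rbar i} (\<gamma>a i)"
    and inc_c: "\<forall>i e. mono_on {0..rbar i} (\<gamma>c i e)"
    and der_a: "\<forall>i. \<forall>s\<in>{0..rbar i}. deriv (\<gamma>a i) s < \<beta>a i"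
    and der_c: "\<forall>i e. \<forall>s\<in>{0..rbar i}. deriv (\<gamma>c i e) s < \<beta>c i e"
    and D_psd: "\<forall>z. 0 \<le> z \<bullet> (D *v z)"
    and T_range: "\<forall>i j. T$i$j \<in> {0..1}"
    and T_prim: "primitive_matrix T"
    and T_ds: "doubly_stochastic T"
    and T_sym: "transpose T = T"
    and \<nu>_even: "even \<nu>"
  shows "strongly_monotone_on {x. \<forall>i. x i \<in> Xset B (loc i) (rbar i)}
           (Fop T \<nu> B loc
              (\<lambda>i r. \<beta>a i * r - \<gamma>a i r)
              (\<lambda>i e t. \<beta>c i e * t - \<gamma>c i e t)
              (\<lambda>\<sigma>. - (D *v \<sigma>) + d))"
proof -
  define G where "G i = cost_grad (\<beta>a i) (deriv (\<gamma>a i)) (\<beta>c i) (\<lambda>e. deriv (\<gamma>c i e))" for i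
  have da: "(\<gamma>a i has_real_derivative deriv (\<gamma>a i) r) (at r)" for i r
    using C2_a by (simp add: C2_real_has_deriv)
  have dc: "(\<gamma>c i e has_real_derivative deriv (\<gamma>c i e) t) (at t)" for i e t
    using C2_c by (simp add: C2_real_has_deriv)
  obtain \<alpha> where "\<alpha> > 0" and cost: "\<forall>i. \<forall>z\<in>Xset B (loc i) (rbar i). \<forall>z'\<in>Xset B (loc i) (rbar i).
      \<alpha> * (norm (z - z'))^2 \<le> (G i z - G i z') \<bullet> (z - z')"
    unfolding G_def using sc_a sc_c
    by (atomize_elim, intro finite_uniform_modulus cost_grad_strongly_monotone[OF _ da _ dc])
      (blast intro: order_trans[OF mult_right_mono] zero_le_power2)+
  have "\<alpha> * (\<Sum>i\<in>UNIV. (norm (x i - y i))^2)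
      \<le> (\<Sum>i\<in>UNIV. (linear_price_Fop T \<nu> B loc \<beta>a \<gamma>a \<beta>c \<gamma>c D d x i
                   - linear_price_Fop T \<nu> B loc \<beta>a \<gamma>a \<beta>c \<gamma>c D d y i) \<bullet> (x i - y i))"
    if "\<forall>i. x i \<in> Xset B (loc i) (rbar i)" "\<forall>i. y i \<in> Xset B (loc i) (rbar i)" for x y
  proof -
    define w where "w j = Hmap B (loc j) (x j - y j)" for j
    have "\<alpha> * (\<Sum>i\<in>UNIV. (norm (x i - y i))^2) \<le> (\<Sum>i\<in>UNIV. (G i (x i) - G i (y i)) \<bullet> (x i - y i))"
      unfolding sum_distrib_left using cost that by (intro sum_mono) blast
    moreover have "0 \<le> (\<Sum>i\<in>UNIV. mpow T \<nu> $ i $ i * (w i \<bullet> (D *v w i)))"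
      unfolding mpow_even_Gram[OF T_sym \<nu>_even]
      using Gram_diag_nonneg D_psd by (intro sum_nonneg mult_nonneg_nonneg) auto
    moreover have "0 \<le> (\<Sum>i\<in>UNIV. \<Sum>j\<in>UNIV. mpow T \<nu> $ i $ j * (w i \<bullet> (D *v w j)))"
      unfolding mpow_even_Gram[OF T_sym \<nu>_even] by (rule Gram_weighted_form_nonneg[OF D_psd])
    ultimately show ?thesis
      unfolding linear_price_Fop_sum_inner_diff[OF da dc] G_def w_def by linarith
  qed
  with \<open>\<alpha> > 0\<close> show ?thesis
    unfolding strongly_monotone_on_def by blast
qed

end
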